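(* The linear space $\mathbb{R}_\mathcal{I}$ (with addition $\bar a+\bar b=\langle a_c+b_c;\,a_wb_w\rangle$ and scalar multiplication $k\bar a=\langle ka_c;\,a_w^{k}\rangle$) equipped with the inner product $\bar a\diamond\bar b=a_cb_c+\ln a_w\ln b_w$ is a Hilbert space; the induced norm is $\|\bar a\|=\sqrt{\bar a\diamond\bar a}=\sqrt{a_c^2+\ln^2 a_w}$.
   Context: An interval number is a closed interval $\bar a=[a_l,a_r]$ with $a_l,a_r\in\mathbb{R}$ and $a_l<a_r$ (real numbers are not regarded as degenerate intervals). $\mathbb{R}_\mathcal{I}$ denotes the set of all interval numbers. For $\bar a=[a_l,a_r]$ put $a_c=(a_l+a_r)/2$ and $a_w=(a_r-a_l)/2>0$, and write $\bar a=\langle a_c;a_w\rangle=[a_c-a_w,a_c+a_w]$. For $k\in\mathbb{R}$, $k\bar a=\langle ka_c;a_w^k\rangle$; the zero element is $\bar 0=\langle 0;1\rangle=[-1,1]$ and subtraction is $\bar a-\bar b=\langle a_c-b_c;a_w/b_w\rangle$. *)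

theory Defs
  imports Complex_Main
begin

type_synonym interval = "real \<times> real"

definition RI :: "interval set" where
  "RI = {(l, r). l < r}"

definition ictr :: "interval \<Rightarrow> real" where
  "ictr a = (fst a + snd a) / 2"

definition iwid :: "interval \<Rightarrow> real" where
  "iwid a = (snd a - fst a) / 2"

text \<open>The interval \<langle>c;w\<rangle> = [c - w, c + w].\<close>
definition mk_iv :: "real \<Rightarrow> real \<Rightarrow> interval" where
  "mk_iv c w = (c - w, c + w)"

definition iadd :: "interval \<Rightarrow> interval \<Rightarrow> interval" where
  "iadd a b = mk_iv (ictr a + ictr b) (iwid a * iwid b)"

definition ismult :: "real \<Rightarrow> interval \<Rightarrow> interval" where
  "ismult k a = mk_iv (k * ictr a) (iwid a powr k)"

definition izero :: interval where
  "izero = mk_iv 0 1"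

definition isub :: "interval \<Rightarrow> interval \<Rightarrow> interval" where
  "isub a b = mk_iv (ictr a - ictr b) (iwid a / iwid b)"

definition iinner :: "interval \<Rightarrow> interval \<Rightarrow> real" where
  "iinner a b = ictr a * ictr b + ln (iwid a) * ln (iwid b)"

definition inorm :: "interval \<Rightarrow> real" where
  "inorm a = sqrt (iinner a a)"

definition real_hilbert_space_on ::
  "'a set \<Rightarrow> ('a \<Rightarrow> 'a \<Rightarrow> 'a) \<Rightarrow> (real \<Rightarrow> 'a \<Rightarrow> 'a) \<Rightarrow> 'a \<Rightarrow> ('a \<Rightarrow> 'a \<Rightarrow> 'a)
     \<Rightarrow> ('a \<Rightarrow> 'a \<Rightarrow> real) \<Rightarrow> bool" where
  "real_hilbert_space_on S add smul z sub inn \<longleftrightarrow>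
     \<comment> \<open>vector space axioms\<close>
     z \<in> S \<and>
     (\<forall>x\<in>S. \<forall>y\<in>S. add x y \<in> S) \<and>
     (\<forall>k. \<forall>x\<in>S. smul k x \<in> S) \<and>
     (\<forall>x\<in>S. \<forall>y\<in>S. \<forall>w\<in>S. add (add x y) w = add x (add y w)) \<and>
     (\<forall>x\<in>S. \<forall>y\<in>S. add x y = add y x) \<and>
     (\<forall>x\<in>S. add x z = x) \<and>
     (\<forall>x\<in>S. \<forall>y\<in>S. sub x y \<in> S \<and> add (sub x y) y = x) \<and>
     (\<forall>x\<in>S. \<exists>y\<in>S. add x y = z) \<and>
     (\<forall>a b. \<forall>x\<in>S. smul a (smul b x) = smul (a * b) x) \<and>
     (\<forall>x\<in>S. smul 1 x = x) \<and>
     (\<forall>a. \<forall>x\<in>S. \<forall>y\<in>S. smul a (add x y) = add (smul a x) (smul a y)) \<and>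
     (\<forall>a b. \<forall>x\<in>S. smul (a + b) x = add (smul a x) (smul b x)) \<and>
     \<comment> \<open>inner product axioms\<close>
     (\<forall>x\<in>S. \<forall>y\<in>S. inn x y = inn y x) \<and>
     (\<forall>x\<in>S. \<forall>y\<in>S. \<forall>w\<in>S. inn (add x y) w = inn x w + inn y w) \<and>
     (\<forall>a. \<forall>x\<in>S. \<forall>y\<in>S. inn (smul a x) y = a * inn x y) \<and>
     (\<forall>x\<in>S. 0 \<le> inn x x) \<and>
     (\<forall>x\<in>S. inn x x = 0 \<longleftrightarrow> x = z) \<and>
     \<comment> \<open>completeness w.r.t. the induced metric d(x,y) = sqrt(inn (x - y) (x - y))\<close>
     (\<forall>X. (\<forall>n. X n \<in> S) \<longrightarrow>
        (\<forall>e>0. \<exists>N. \<forall>m\<ge>N. \<forall>n\<ge>N. sqrt (inn (sub (X m) (X n)) (sub (X m) (X n))) < e) \<longrightarrow>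
        (\<exists>L\<in>S. (\<lambda>n. sqrt (inn (sub (X n) L) (sub (X n) L))) \<longlonglongrightarrow> 0))"

end

theory Submission
  imports Defs
begin

text \<open>The algebraic axioms are identities for \<open>exp\<close>, \<open>ln\<close> and \<open>powr\<close>. For the
  analytic part, \<open>\<langle>c;w\<rangle> \<mapsto> c + i ln w\<close> is a bijection from the interval numbers onto \<open>\<complex>\<close>
  that maps \<open>a - b\<close> to the difference of the images and \<open>a \<diamond> a\<close> to the squared modulus; it is
  thus an isometry for the induced metric, and completeness is inherited from \<open>\<complex>\<close>.\<close>

lemma ictr_mk_iv [simp]: "ictr (mk_iv c w) = c"
  by (simp add: ictr_def mk_iv_def)

lemma iwid_mk_iv [simp]: "iwid (mk_iv c w) = w"
  by (simp add: iwid_def mk_iv_def)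

lemma mk_iv_ictr_iwid [simp]: "mk_iv (ictr x) (iwid x) = x"
  by (cases x) (simp add: ictr_def iwid_def mk_iv_def field_simps)

lemma mk_iv_eq_iff: "mk_iv c w = mk_iv c' w' \<longleftrightarrow> c = c' \<and> w = w'"
  by (metis ictr_mk_iv iwid_mk_iv)

lemma mem_RI_iff: "x \<in> RI \<longleftrightarrow> iwid x > 0"
  by (cases x) (simp add: RI_def iwid_def)

definition iv_to_complex :: "interval \<Rightarrow> complex" where
  "iv_to_complex x = Complex (ictr x) (ln (iwid x))"

definition iv_of_complex :: "complex \<Rightarrow> interval" where
  "iv_of_complex z = mk_iv (Re z) (exp (Im z))"

lemma iv_of_complex_in_RI: "iv_of_complex z \<in> RI"
  by (simp add: iv_of_complex_def mem_RI_iff)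

lemma iv_to_complex_of_complex [simp]: "iv_to_complex (iv_of_complex z) = z"
  by (simp add: iv_to_complex_def iv_of_complex_def complex_eq_iff)

lemma iv_of_complex_to_complex [simp]: "x \<in> RI \<Longrightarrow> iv_of_complex (iv_to_complex x) = x"
  by (simp add: iv_to_complex_def iv_of_complex_def mem_RI_iff)

lemma iv_to_complex_isub:
  "x \<in> RI \<Longrightarrow> y \<in> RI \<Longrightarrow> iv_to_complex (isub x y) = iv_to_complex x - iv_to_complex y"
  by (simp add: iv_to_complex_def isub_def mem_RI_iff ln_div complex_eq_iff)

lemma iinner_self_eq_cmod_square: "iinner x x = (cmod (iv_to_complex x))\<^sup>2"
  by (simp add: iinner_def iv_to_complex_def cmod_def power2_eq_square)

lemma iinner_self_nonneg: "0 \<le> iinner x x"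
  by (simp add: iinner_self_eq_cmod_square)

lemma iv_to_complex_inj_on_RI:
  "x \<in> RI \<Longrightarrow> y \<in> RI \<Longrightarrow> iv_to_complex x = iv_to_complex y \<longleftrightarrow> x = y"
  by (metis iv_of_complex_to_complex)

lemma iinner_self_eq_0_iff:
  assumes "x \<in> RI"
  shows "iinner x x = 0 \<longleftrightarrow> x = izero"
proof -
  have "izero \<in> RI"
    by (simp add: izero_def mem_RI_iff)
  moreover have "iv_to_complex izero = 0"
    by (simp add: iv_to_complex_def izero_def complex_eq_iff)
  moreover have "iinner x x = 0 \<longleftrightarrow> iv_to_complex x = 0"
    by (simp add: iinner_self_eq_cmod_square)
  ultimately show ?thesis
    using assms iv_to_complex_inj_on_RI by metis
qed

lemma sqrt_iinner_isub_eq_dist: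
  assumes "x \<in> RI" "y \<in> RI"
  shows "sqrt (iinner (isub x y) (isub x y)) = dist (iv_to_complex x) (iv_to_complex y)"
  using assms by (simp add: iinner_self_eq_cmod_square iv_to_complex_isub dist_norm)

lemma RI_complete:
  assumes X: "\<forall>n. X n \<in> RI"
    and Cauchy_X: "\<forall>e>0. \<exists>N. \<forall>m\<ge>N. \<forall>n\<ge>N. sqrt (iinner (isub (X m) (X n)) (isub (X m) (X n))) < e"
  shows "\<exists>L\<in>RI. (\<lambda>n. sqrt (iinner (isub (X n) L) (isub (X n) L))) \<longlonglongrightarrow> 0"
proof -
  have dist_eq:
    "dist (iv_to_complex (X m)) (iv_to_complex L) = sqrt (iinner (isub (X m) L) (isub (X m) L))"
    if "L \<in> RI" for m L
    using X that by (simp add: sqrt_iinner_isub_eq_dist)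
  have "Cauchy (\<lambda>n. iv_to_complex (X n))"
    unfolding Cauchy_def using Cauchy_X by (simp only: dist_eq X)
  then obtain z where z: "(\<lambda>n. iv_to_complex (X n)) \<longlonglongrightarrow> z"
    using Cauchy_convergent_iff convergent_def by blast
  define L where "L = iv_of_complex z"
  have L: "L \<in> RI"
    by (simp add: L_def iv_of_complex_in_RI)
  have "(\<lambda>n. dist (iv_to_complex (X n)) (iv_to_complex L)) \<longlonglongrightarrow> 0"
    using z by (simp add: L_def flip: tendsto_dist_iff)
  then have "(\<lambda>n. sqrt (iinner (isub (X n) L) (isub (X n) L))) \<longlonglongrightarrow> 0"
    by (simp only: dist_eq[OF L])
  with L show ?thesis by blast
qed

lemma iadd_inverse_exists:
  assumes "x \<in> RI"
  shows "\<exists>y\<in>RI. iadd x y = izero"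
proof
  show "mk_iv (- ictr x) (1 / iwid x) \<in> RI"
    using assms by (simp add: mem_RI_iff)
  show "iadd x (mk_iv (- ictr x) (1 / iwid x)) = izero"
    using assms by (simp add: iadd_def izero_def mem_RI_iff)
qed

lemma real_hilbert_space_on_RI: "real_hilbert_space_on RI iadd ismult izero isub iinner"
  unfolding real_hilbert_space_on_def
proof (intro conjI)
  show "izero \<in> RI" "\<forall>x\<in>RI. \<forall>y\<in>RI. iadd x y \<in> RI" "\<forall>k. \<forall>x\<in>RI. ismult k x \<in> RI"
    by (simp_all add: izero_def iadd_def ismult_def mem_RI_iff)
  show "\<forall>x\<in>RI. \<forall>y\<in>RI. \<forall>w\<in>RI. iadd (iadd x y) w = iadd x (iadd y w)"
    "\<forall>x\<in>RI. \<forall>y\<in>RI. iadd x y = iadd y x"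
    "\<forall>x\<in>RI. iadd x izero = x"
    "\<forall>x\<in>RI. \<forall>y\<in>RI. isub x y \<in> RI \<and> iadd (isub x y) y = x"
    by (simp_all add: iadd_def izero_def isub_def mk_iv_eq_iff mem_RI_iff)
  show "\<forall>x\<in>RI. \<exists>y\<in>RI. iadd x y = izero"
    using iadd_inverse_exists by blast
  show "\<forall>a b. \<forall>x\<in>RI. ismult a (ismult b x) = ismult (a * b) x"
    "\<forall>x\<in>RI. ismult 1 x = x"
    "\<forall>a. \<forall>x\<in>RI. \<forall>y\<in>RI. ismult a (iadd x y) = iadd (ismult a x) (ismult a y)"
    "\<forall>a b. \<forall>x\<in>RI. ismult (a + b) x = iadd (ismult a x) (ismult b x)"
    by (simp_all add: ismult_def iadd_def mem_RI_iff mk_iv_eq_iff powr_powr powr_mult powr_add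
        algebra_simps)
  show "\<forall>x\<in>RI. \<forall>y\<in>RI. iinner x y = iinner y x"
    "\<forall>x\<in>RI. \<forall>y\<in>RI. \<forall>w\<in>RI. iinner (iadd x y) w = iinner x w + iinner y w"
    "\<forall>a. \<forall>x\<in>RI. \<forall>y\<in>RI. iinner (ismult a x) y = a * iinner x y"
    by (simp_all add: iinner_def iadd_def ismult_def mem_RI_iff ln_mult ln_powr algebra_simps)
  show "\<forall>x\<in>RI. 0 \<le> iinner x x"
    by (simp add: iinner_self_nonneg)
  show "\<forall>x\<in>RI. iinner x x = 0 \<longleftrightarrow> x = izero"
    by (simp add: iinner_self_eq_0_iff)
  show "\<forall>X. (\<forall>n. X n \<in> RI) \<longrightarrow>
      (\<forall>e>0. \<exists>N. \<forall>m\<ge>N. \<forall>n\<ge>N. sqrt (iinner (isub (X m) (X n)) (isub (X m) (X n))) < e) \<longrightarrow>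
      (\<exists>L\<in>RI. (\<lambda>n. sqrt (iinner (isub (X n) L) (isub (X n) L))) \<longlonglongrightarrow> 0)"
    using RI_complete by blast
qed

theorem theorem2p54:
  shows "real_hilbert_space_on RI iadd ismult izero isub iinner \<and>
         (\<forall>a\<in>RI. inorm a = sqrt (iinner a a) \<and>
                  inorm a = sqrt ((ictr a)\<^sup>2 + (ln (iwid a))\<^sup>2))"
  using real_hilbert_space_on_RI by (simp add: inorm_def iinner_def power2_eq_square)

end
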